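(* For every integer $n \geq 4$, the graph $G_n$ has chromatic number $n-2$ and is edge-critical, i.e., $\chi(G_n - e) < \chi(G_n)$ for every edge $e$ of $G_n$.
   Context: Let $[n]=\{1,\dots,n\}$. A $2$-subset $\{a,b\}$ of $[n]$ with $a<b$ is called stable if $b \neq a+1$ and $\{a,b\}\neq\{1,n\}$; it is written $ab$. For $n\ge 4$, the graph $G_n$ has as vertex set all stable $2$-subsets of $[n]$. Two vertices $ab$ ($a<b$) and $cd$ ($c<d$) with $a<c$ are adjacent in $G_n$ if and only if $\{a,b\}\cap\{c,d\}=\emptyset$ and one of the following holds: $a<c<b<d$ (a crossing pair), or $1<a<c<d<b$ (a transverse pair). $\chi$ denotes chromatic number. *)

theory Defs
  imports Main
begin

record 'v sgraph =
  verts :: "'v set"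
  edges :: "'v set set"

definition proper_colouring :: "'v sgraph \<Rightarrow> nat \<Rightarrow> ('v \<Rightarrow> nat) \<Rightarrow> bool" where
  "proper_colouring G k c \<longleftrightarrow>
     (\<forall>v\<in>verts G. c v < k) \<and> (\<forall>u\<in>verts G. \<forall>v\<in>verts G. {u, v} \<in> edges G \<longrightarrow> c u \<noteq> c v)"

definition colourable :: "'v sgraph \<Rightarrow> nat \<Rightarrow> bool" where
  "colourable G k \<longleftrightarrow> (\<exists>c. proper_colouring G k c)"

definition chromatic_number :: "'v sgraph \<Rightarrow> nat" where
  "chromatic_number G = (LEAST k. colourable G k)"

definition delete_edge :: "'v sgraph \<Rightarrow> 'v set \<Rightarrow> 'v sgraph" where
  "delete_edge G e = \<lparr>verts = verts G, edges = edges G - {e}\<rparr>"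

text \<open>Stable 2-subsets of [n], represented as pairs (a,b) with a < b.\<close>

definition stable :: "nat \<Rightarrow> nat \<times> nat \<Rightarrow> bool" where
  "stable n p \<longleftrightarrow> (case p of (a, b) \<Rightarrow>
     1 \<le> a \<and> a < b \<and> b \<le> n \<and> b \<noteq> a + 1 \<and> \<not> (a = 1 \<and> b = n))"

definition adj_ordered :: "nat \<times> nat \<Rightarrow> nat \<times> nat \<Rightarrow> bool" where
  "adj_ordered p q \<longleftrightarrow> (case p of (a, b) \<Rightarrow> case q of (c, d) \<Rightarrow>
     a < c \<and> {a, b} \<inter> {c, d} = {} \<and> ((a < c \<and> c < b \<and> b < d) \<or> (1 < a \<and> a < c \<and> c < d \<and> d < b)))"

definition G :: "nat \<Rightarrow> (nat \<times> nat) sgraph" where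
  "G n = \<lparr>verts = {p. stable n p},
          edges = {{p, q} | p q. stable n p \<and> stable n q \<and> adj_ordered p q}\<rparr>"

end

theory Submission
  imports Defs
begin

text \<open>Colouring ab by a - 1 uses n - 2 colours, since adjacent pairs have distinct smaller
  endpoints. Conversely, in a colouring of G(n+1) the colour \<alpha> of 1n misses every
  vertex j(n+1) with 2 \<le> j \<le> n - 1, as these all cross 1n. A vertex v of G(n) coloured \<alpha>
  can therefore be recoloured with the colour of j(n+1), where j is the smallest endpoint of v
  other than 1: every neighbour of v in G(n) is also adjacent to j(n+1). This frees the colour \<alpha>,
  and induction from G(4) (the single edge 13, 24) gives \<chi>(G(n)) = n - 2.

  For criticality, fix an edge e and a set Q consisting of 1 and the endpoints of e (and c + 1
  when e is a transverse pair ab, cd with a < c < d < b). A vertex with an endpoint outside Q is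
  coloured by its smaller such endpoint; adjacent vertices are disjoint, so these colours never
  clash. The few vertices inside Q get an explicit colouring of G - e by colours in Q that
  avoids three points of Q, leaving n - 3 colours in all.\<close>

lemma colourable_if_colours_in:
  fixes H :: "'v sgraph" and f :: "'v \<Rightarrow> 'c"
  assumes "finite S" and "f ` verts H \<subseteq> S"
    and "\<And>u v. u \<in> verts H \<Longrightarrow> v \<in> verts H \<Longrightarrow> {u, v} \<in> edges H \<Longrightarrow> f u \<noteq> f v"
  shows "colourable H (card S)"
proof -
  obtain h where h: "bij_betw h S {0..<card S}"
    using ex_bij_betw_finite_nat[OF \<open>finite S\<close>] by blast
  have "proper_colouring H (card S) (h \<circ> f)"
    unfolding proper_colouring_def
  proof (intro conjI ballI impI)
    fix v assume "v \<in> verts H"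
    then show "(h \<circ> f) v < card S"
      using bij_betwE[OF h] assms(2) by auto
  next
    fix u v assume "u \<in> verts H" "v \<in> verts H" "{u, v} \<in> edges H"
    then show "(h \<circ> f) u \<noteq> (h \<circ> f) v"
      using assms(2,3) bij_betw_imp_inj_on[OF h] by (metis comp_apply image_subset_iff inj_on_eq_iff)
  qed
  then show ?thesis
    by (auto simp: colourable_def)
qed

lemma chromatic_number_le: "colourable H k \<Longrightarrow> chromatic_number H \<le> k"
  unfolding chromatic_number_def by (rule Least_le)

lemma chromatic_number_eqI:
  assumes "colourable H k" and "\<And>j. colourable H j \<Longrightarrow> k \<le> j"
  shows "chromatic_number H = k"
  unfolding chromatic_number_def using assms by (rule Least_equality)

definition adjacent :: "nat \<times> nat \<Rightarrow> nat \<times> nat \<Rightarrow> bool" where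
  "adjacent p q \<longleftrightarrow> adj_ordered p q \<or> adj_ordered q p"

lemma adjacent_sym: "adjacent u v \<Longrightarrow> adjacent v u"
  by (auto simp: adjacent_def)

lemma adjacent_disjoint: "adjacent (a, b) (c, d) \<Longrightarrow> {a, b} \<inter> {c, d} = {}"
  by (auto simp: adjacent_def adj_ordered_def)

lemma adjacent_fst_less_snd: "adjacent (a, b) (c, d) \<Longrightarrow> c < b"
  by (auto simp: adjacent_def adj_ordered_def)

lemma adjacent_1_snd_less: "1 \<le> x \<Longrightarrow> adjacent (x, y) (1, b) \<Longrightarrow> b < y"
  by (auto simp: adjacent_def adj_ordered_def)

lemma adjacent_of_snd_beyond:
  assumes "2 \<le> j" "j \<noteq> x" "j < y" "x < y" "y < m"
  shows "adjacent (x, y) (j, m)"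
  using assms by (cases "x < j") (auto simp: adjacent_def adj_ordered_def)

lemma adj_ordered_fst_less: "adj_ordered u v \<Longrightarrow> fst u < fst v"
  by (auto simp: adj_ordered_def split: prod.splits)

lemma verts_G: "verts (G n) = {p. stable n p}"
  by (simp add: G_def)

lemma edges_G: "{u, v} \<in> edges (G n) \<longleftrightarrow> stable n u \<and> stable n v \<and> adjacent u v"
proof
  assume "{u, v} \<in> edges (G n)"
  then obtain p q where "{u, v} = {p, q}" "stable n p" "stable n q" "adj_ordered p q"
    by (auto simp: G_def)
  then show "stable n u \<and> stable n v \<and> adjacent u v"
    by (auto simp: doubleton_eq_iff adjacent_def)
next
  assume "stable n u \<and> stable n v \<and> adjacent u v"
  moreover have "{u, v} = {v, u}"
    by (rule insert_commute)
  ultimately show "{u, v} \<in> edges (G n)"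
    by (simp only: G_def sgraph.select_convs adjacent_def) blast
qed

lemma proper_colouring_G_iff:
  "proper_colouring (G n) k c \<longleftrightarrow>
     (\<forall>v. stable n v \<longrightarrow> c v < k) \<and>
     (\<forall>u v. stable n u \<longrightarrow> stable n v \<longrightarrow> adj_ordered u v \<longrightarrow> c u \<noteq> c v)"
  unfolding proper_colouring_def verts_G edges_G adjacent_def by (auto; metis)

lemma colourable_G_by_fst: "colourable (G n) (n - 2)"
proof -
  have "fst v - 1 < n - 2" if "stable n v" for v
    using that by (auto simp: stable_def split: prod.splits)
  moreover have "fst u - 1 \<noteq> fst v - 1" if "stable n u" "adj_ordered u v" for u v
    using that adj_ordered_fst_less[OF that(2)] by (auto simp: stable_def split: prod.splits)
  ultimately have "proper_colouring (G n) (n - 2) (\<lambda>v. fst v - 1)"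
    unfolding proper_colouring_G_iff by blast
  then show ?thesis
    by (auto simp: colourable_def)
qed

lemma colourable_G_ge_2:
  assumes "4 \<le> n" and "colourable (G n) k"
  shows "2 \<le> k"
proof -
  obtain c where "proper_colouring (G n) k c"
    using assms(2) by (auto simp: colourable_def)
  moreover have "stable n (1, 3)" "stable n (2, 4)" and "adj_ordered (1, 3) (2, 4)"
    using assms(1) by (auto simp: stable_def adj_ordered_def)
  ultimately have "c (1, 3) < k" "c (2, 4) < k" "c (1, 3) \<noteq> c (2, 4)"
    unfolding proper_colouring_G_iff by blast+
  then show ?thesis
    by linarith
qed

lemma stable_Suc: "stable n v \<Longrightarrow> stable (Suc n) v"
  by (auto simp: stable_def split: prod.splits)

definition lift :: "nat \<Rightarrow> nat \<times> nat \<Rightarrow> nat \<times> nat" where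
  "lift n v = (if fst v = 1 then snd v else fst v, n)"

lemma stable_lift:
  assumes "stable n v"
  shows "stable (Suc n) (lift (Suc n) v)" and "adj_ordered (1, n) (lift (Suc n) v)"
proof -
  obtain a b where v: "v = (a, b)"
    by force
  have "2 \<le> fst (lift (Suc n) v)" "fst (lift (Suc n) v) < n"
    using assms v by (auto simp: lift_def stable_def)
  then show "stable (Suc n) (lift (Suc n) v)" and "adj_ordered (1, n) (lift (Suc n) v)"
    by (simp_all add: lift_def stable_def adj_ordered_def)
qed

lemma adjacent_lift:
  assumes "stable n u" and "stable n v" and "adjacent u v"
  shows "adjacent u (lift (Suc n) v)"
proof -
  obtain x y a b where uv: "u = (x, y)" "v = (a, b)"
    by force
  have "1 \<le> x" "x < y" "y < Suc n" "1 \<le> a" "a < b"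
    using assms(1,2) uv by (simp_all add: stable_def)
  moreover have "{x, y} \<inter> {a, b} = {}" "a < y"
    using assms(3) uv adjacent_disjoint adjacent_fst_less_snd by blast+
  moreover have "b < y" if "a = 1"
    using adjacent_1_snd_less \<open>1 \<le> x\<close> assms(3) uv that by blast
  ultimately show ?thesis
    unfolding uv lift_def fst_conv snd_conv by (intro adjacent_of_snd_beyond) auto
qed

lemma colourable_G_Suc_imp:
  assumes "3 \<le> n" and "colourable (G (Suc n)) (Suc k)"
  shows "colourable (G n) k"
proof -
  obtain c where c: "proper_colouring (G (Suc n)) (Suc k) c"
    using assms(2) by (auto simp: colourable_def)
  have c_bound: "c v < Suc k" if "stable (Suc n) v" for v
    using c that unfolding proper_colouring_G_iff by blast
  have c_proper: "c u \<noteq> c v" if "stable (Suc n) u" "stable (Suc n) v" "adjacent u v" for u v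
    using c that unfolding proper_colouring_G_iff adjacent_def by metis
  define \<alpha> where "\<alpha> = c (1, n)"
  define c' where "c' v = (if c v = \<alpha> then c (lift (Suc n) v) else c v)" for v
  have stable_1n: "stable (Suc n) (1, n)"
    using assms(1) by (simp add: stable_def)
  have lift_not_\<alpha>: "c (lift (Suc n) v) \<noteq> \<alpha>" if "stable n v" for v
    unfolding \<alpha>_def using c_proper stable_lift[OF that] stable_1n
    by (metis adjacent_def)
  have "c' v \<in> {..<Suc k} - {\<alpha>}" if "stable n v" for v
    using c_bound[OF stable_Suc[OF that]] c_bound[OF stable_lift(1)[OF that]]
      lift_not_\<alpha>[OF that]
    by (auto simp: c'_def)
  then have "c' ` verts (G n) \<subseteq> {..<Suc k} - {\<alpha>}"
    by (auto simp: verts_G)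
  moreover have "c' u \<noteq> c' v" if "{u, v} \<in> edges (G n)" for u v
  proof -
    have uv: "stable n u" "stable n v" "adjacent u v"
      using that by (simp_all add: edges_G)
    then have vu: "adjacent v u"
      by (simp add: adjacent_sym)
    have "c u \<noteq> c v"
      using c_proper[OF stable_Suc stable_Suc] uv by blast
    moreover have "c u \<noteq> c (lift (Suc n) v)" "c v \<noteq> c (lift (Suc n) u)"
      using c_proper[OF stable_Suc stable_lift(1)] uv vu
        adjacent_lift[OF uv] adjacent_lift[OF uv(2,1) vu] by blast+
    ultimately show ?thesis
      by (auto simp: c'_def)
  qed
  ultimately have "colourable (G n) (card ({..<Suc k} - {\<alpha>}))"
    by (intro colourable_if_colours_in) auto
  moreover have "\<alpha> < Suc k"
    using c_bound stable_1n by (simp add: \<alpha>_def)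
  ultimately show ?thesis
    by simp
qed

lemma colourable_G_ge:
  assumes "4 \<le> n" and "colourable (G n) k"
  shows "n - 2 \<le> k"
  using assms
proof (induction n arbitrary: k rule: nat_induct_at_least)
  case base
  then show ?case
    using colourable_G_ge_2[of 4 k] by simp
next
  case (Suc n)
  then obtain k' where k: "k = Suc k'"
    using colourable_G_ge_2[of "Suc n" k] by (cases k) auto
  with Suc have "colourable (G n) k'"
    using colourable_G_Suc_imp[of n k'] by simp
  with Suc.IH k show ?case
    by fastforce
qed

lemma chromatic_number_G: "4 \<le> n \<Longrightarrow> chromatic_number (G n) = n - 2"
  by (intro chromatic_number_eqI colourable_G_by_fst colourable_G_ge)

definition endpoint_colour :: "nat set \<Rightarrow> (nat \<times> nat \<Rightarrow> nat) \<Rightarrow> nat \<times> nat \<Rightarrow> nat" where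
  "endpoint_colour Q f v = (if fst v \<notin> Q then fst v else if snd v \<notin> Q then snd v else f v)"

lemma colourable_delete_edge_G_endpoint_colour:
  assumes "R \<subseteq> Q" and f_range: "\<And>v. f v \<in> Q \<inter> {1..n} - R"
    and f_proper: "\<And>x y x' y'. {x, y, x', y'} \<subseteq> Q \<Longrightarrow> x < y \<Longrightarrow> x' < y' \<Longrightarrow>
      adj_ordered (x, y) (x', y') \<Longrightarrow> {(x, y), (x', y')} \<noteq> e \<Longrightarrow> f (x, y) \<noteq> f (x', y')"
  shows "colourable (delete_edge (G n) e) (card ({1..n} - R))"
proof (rule colourable_if_colours_in)
  show "finite ({1..n} - R)"
    by simp
  show "endpoint_colour Q f ` verts (delete_edge (G n) e) \<subseteq> {1..n} - R"
    using assms(1) f_range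
    by (auto simp: delete_edge_def verts_G endpoint_colour_def stable_def split: prod.splits)
  have colour_ne: "endpoint_colour Q f u \<noteq> endpoint_colour Q f v"
    if "stable n u" "stable n v" "adj_ordered u v" "{u, v} \<noteq> e" for u v
  proof -
    obtain x y x' y' where uv: "u = (x, y)" "v = (x', y')"
      by force
    have "x < y" "x' < y'"
      using that(1,2) uv by (simp_all add: stable_def)
    moreover have "{x, y} \<inter> {x', y'} = {}"
      using that(3) uv adjacent_disjoint unfolding adjacent_def by blast
    ultimately show ?thesis
      using that(3,4) uv f_range[of u] f_range[of v] f_proper[of x y x' y']
      by (auto simp: endpoint_colour_def)
  qed
  fix u v
  assume "u \<in> verts (delete_edge (G n) e)" "v \<in> verts (delete_edge (G n) e)"
    and "{u, v} \<in> edges (delete_edge (G n) e)"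
  then have "stable n u" "stable n v" "adjacent u v" "{u, v} \<noteq> e" "{v, u} \<noteq> e"
    by (auto simp: delete_edge_def edges_G insert_commute)
  then show "endpoint_colour Q f u \<noteq> endpoint_colour Q f v"
    using colour_ne unfolding adjacent_def by metis
qed

lemma increasing_pair_in_chain5:
  assumes "p1 \<le> p2" "p2 < p3" "p3 < p4" "p4 < (p5::nat)"
    and "x \<in> {p1, p2, p3, p4, p5}" "y \<in> {p1, p2, p3, p4, p5}" "x < y"
  shows "(x, y) \<in> {(p1, p2), (p1, p3), (p1, p4), (p1, p5), (p2, p3), (p2, p4), (p2, p5),
    (p3, p4), (p3, p5), (p4, p5)}"
  using assms(5-7) unfolding insert_iff empty_iff
  by (elim disjE) (use assms(1-4) in simp_all)

lemma increasing_pair_in_chain6: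
  assumes "p1 \<le> p2" "p2 < p3" "p3 < p4" "p4 < p5" "p5 < (p6::nat)"
    and "x \<in> {p1, p2, p3, p4, p5, p6}" "y \<in> {p1, p2, p3, p4, p5, p6}" "x < y"
  shows "(x, y) \<in> {(p1, p2), (p1, p3), (p1, p4), (p1, p5), (p1, p6), (p2, p3), (p2, p4),
    (p2, p5), (p2, p6), (p3, p4), (p3, p5), (p3, p6), (p4, p5), (p4, p6), (p5, p6)}"
  using assms(6-8) unfolding insert_iff empty_iff
  by (elim disjE) (use assms(1-5) in simp_all)

definition crossing_colour :: "nat \<Rightarrow> nat \<Rightarrow> nat \<Rightarrow> nat \<Rightarrow> nat \<times> nat \<Rightarrow> nat" where
  "crossing_colour a b c d u = (if u \<in> {(a, b), (a, d), (c, d)} then a else 1)"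

lemma crossing_colour_proper:
  assumes "1 \<le> a" "a < c" "c < b" "b < d"
    and "u \<in> {(1, a), (1, c), (1, b), (1, d), (a, c), (a, b), (a, d), (c, b), (c, d), (b, d)}"
    and "v \<in> {(1, a), (1, c), (1, b), (1, d), (a, c), (a, b), (a, d), (c, b), (c, d), (b, d)}"
    and "adj_ordered u v" "{u, v} \<noteq> {(a, b), (c, d)}"
  shows "crossing_colour a b c d u \<noteq> crossing_colour a b c d v"
  using assms(5-8) unfolding insert_iff empty_iff
  by (elim disjE) (use assms(1-4) in \<open>auto simp: adj_ordered_def crossing_colour_def\<close>)

definition transverse_colour :: "nat \<Rightarrow> nat \<Rightarrow> nat \<Rightarrow> nat \<Rightarrow> nat \<times> nat \<Rightarrow> nat" where
  "transverse_colour a b c d u =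
    (if u \<in> {(c, b), (1, c), (Suc c, b), (c, Suc c)} then c
     else if u \<in> {(1, Suc c), (1, d), (a, Suc c), (Suc c, d)} then 1 else a)"

lemma transverse_colour_proper:
  assumes "1 < a" "a < c" "Suc c < d" "d < b"
    and "u \<in> {(1, a), (1, c), (1, Suc c), (1, d), (1, b), (a, c), (a, Suc c), (a, d), (a, b),
      (c, Suc c), (c, d), (c, b), (Suc c, d), (Suc c, b), (d, b)}"
    and "v \<in> {(1, a), (1, c), (1, Suc c), (1, d), (1, b), (a, c), (a, Suc c), (a, d), (a, b),
      (c, Suc c), (c, d), (c, b), (Suc c, d), (Suc c, b), (d, b)}"
    and "adj_ordered u v" "{u, v} \<noteq> {(a, b), (c, d)}"
  shows "transverse_colour a b c d u \<noteq> transverse_colour a b c d v"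
  using assms(5-8) unfolding insert_iff empty_iff
  by (elim disjE) (use assms(1-4) in \<open>auto simp: adj_ordered_def transverse_colour_def\<close>)

lemma colourable_delete_crossing_edge:
  assumes "stable n (a, b)" "stable n (c, d)" and "a < c" "c < b" "b < d"
  shows "colourable (delete_edge (G n) {(a, b), (c, d)}) (n - 3)"
proof -
  have "1 \<le> a" "d \<le> n"
    using assms by (simp_all add: stable_def)
  have "colourable (delete_edge (G n) {(a, b), (c, d)}) (card ({1..n} - {c, b, d}))"
  proof (rule colourable_delete_edge_G_endpoint_colour[where Q = "{1, a, c, b, d}"
        and f = "crossing_colour a b c d"])
    show "crossing_colour a b c d v \<in> {1, a, c, b, d} \<inter> {1..n} - {c, b, d}" for v
      using \<open>1 \<le> a\<close> \<open>d \<le> n\<close> assms(3-5) by (auto simp: crossing_colour_def)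
    show "crossing_colour a b c d (x, y) \<noteq> crossing_colour a b c d (x', y')"
      if "{x, y, x', y'} \<subseteq> {1, a, c, b, d}" "x < y" "x' < y'"
        "adj_ordered (x, y) (x', y')" "{(x, y), (x', y')} \<noteq> {(a, b), (c, d)}" for x y x' y'
      using that \<open>1 \<le> a\<close> assms(3-5)
      by (intro crossing_colour_proper increasing_pair_in_chain5) auto
  qed auto
  moreover have "card ({1..n} - {c, b, d}) = n - 3"
    using \<open>1 \<le> a\<close> \<open>d \<le> n\<close> assms(3-5) by (simp add: card_Diff_subset)
  ultimately show ?thesis
    by simp
qed

lemma colourable_delete_transverse_edge:
  assumes "stable n (a, b)" "stable n (c, d)" and "1 < a" "a < c" "c < d" "d < b"
  shows "colourable (delete_edge (G n) {(a, b), (c, d)}) (n - 3)"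
proof -
  have "Suc c < d" "b \<le> n"
    using assms by (simp_all add: stable_def)
  have "colourable (delete_edge (G n) {(a, b), (c, d)}) (card ({1..n} - {Suc c, d, b}))"
  proof (rule colourable_delete_edge_G_endpoint_colour[where Q = "{1, a, c, Suc c, d, b}"
        and f = "transverse_colour a b c d"])
    show "transverse_colour a b c d v \<in> {1, a, c, Suc c, d, b} \<inter> {1..n} - {Suc c, d, b}" for v
      using \<open>Suc c < d\<close> \<open>b \<le> n\<close> assms(3-6) by (auto simp: transverse_colour_def)
    show "transverse_colour a b c d (x, y) \<noteq> transverse_colour a b c d (x', y')"
      if "{x, y, x', y'} \<subseteq> {1, a, c, Suc c, d, b}" "x < y" "x' < y'"
        "adj_ordered (x, y) (x', y')" "{(x, y), (x', y')} \<noteq> {(a, b), (c, d)}" for x y x' y'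
      using that \<open>Suc c < d\<close> assms(3-6)
      by (intro transverse_colour_proper increasing_pair_in_chain6) auto
  qed auto
  moreover have "card ({1..n} - {Suc c, d, b}) = n - 3"
    using \<open>Suc c < d\<close> \<open>b \<le> n\<close> assms(3-6) by (simp add: card_Diff_subset)
  ultimately show ?thesis
    by simp
qed

lemma colourable_delete_edge_G:
  assumes "e \<in> edges (G n)"
  shows "colourable (delete_edge (G n) e) (n - 3)"
proof -
  obtain a b c d where e: "e = {(a, b), (c, d)}" "stable n (a, b)" "stable n (c, d)"
    and "adj_ordered (a, b) (c, d)"
    using assms by (auto simp: G_def)
  then consider "a < c" "c < b" "b < d" | "1 < a" "a < c" "c < d" "d < b"
    by (auto simp: adj_ordered_def)
  then show ?thesis
    using colourable_delete_crossing_edge[OF e(2,3)] colourable_delete_transverse_edge[OF e(2,3)]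
    unfolding e(1) by cases
qed

theorem theorem1:
  fixes n :: nat
  assumes "n \<ge> 4"
  shows "chromatic_number (G n) = n - 2 \<and>
         (\<forall>e\<in>edges (G n). chromatic_number (delete_edge (G n) e) < chromatic_number (G n))"
proof -
  have \<chi>: "chromatic_number (G n) = n - 2"
    using assms by (rule chromatic_number_G)
  have "chromatic_number (delete_edge (G n) e) \<le> n - 3" if "e \<in> edges (G n)" for e
    using colourable_delete_edge_G[OF that] by (rule chromatic_number_le)
  with \<chi> assms show ?thesis
    by fastforce
qed

end
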